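(* Let $\{x^k\}_k$, $\{z^k\}_k$ be generated by the normal map-based stochastic proximal gradient method described in the context. Then for all integers $0\le m<n$ and every sample $\omega$ with $L(\omega)<\infty$ (for $L(\omega)=\infty$ the right-hand sides below are interpreted as $+\infty$), \[ d_{m,n}\le\max_{m<i\le n}\|z^i-z^m\|\le(1+\tau_{m,n}\bar\tau_{m,n})\big[\tau_{m,n}\|F^\lambda_{\mathrm{nor}}(z^m)\|+s_{m,n}\big], \] \[ \|e^{m,n}\|\le\bar\tau_{m,n}\tau_{m,n}^2\|F^\lambda_{\mathrm{nor}}(z^m)\|+(1+\bar\tau_{m,n}\tau_{m,n})s_{m,n}. \]
   Context: Let $\varphi:\mathbb{R}^d\to(-\infty,\infty]$ be convex, lower semicontinuous and proper, let $f:\mathbb{R}^d\to\mathbb{R}$ be continuously differentiable on an open set containing $\mathrm{dom}\,\varphi$, and set $\psi=f+\varphi$. For $\lambda>0$ let $\mathrm{prox}_{\lambda\varphi}(x)=\operatorname{argmin}_y\{\varphi(y)+\frac{1}{2\lambda}\|x-y\|^2\}$, $\mathrm{env}_{\lambda\varphi}(x)=\min_y\{\varphi(y)+\frac1{2\lambda}\|x-y\|^2\}$ (so $\nabla\mathrm{env}_{\lambda\varphi}(x)=(x-\mathrm{prox}_{\lambda\varphi}(x))/\lambda$), and define the normal map $F^\lambda_{\mathrm{nor}}(z)=\nabla f(\mathrm{prox}_{\lambda\varphi}(z))+\frac1\lambda(z-\mathrm{prox}_{\lambda\varphi}(z))$. Method: on a filtered probability space $(\Omega,\mathcal F,\{\mathcal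 F_k\}_k,\mathbb P)$, with $\lambda>0$, step sizes $\{\alpha_k\}_k\subset(0,\infty)$, deterministic $z^0$, $x^0=\mathrm{prox}_{\lambda\varphi}(z^0)$, and $\mathcal F_{k+1}$-measurable random vectors $g^k$, set $z^{k+1}=z^k-\alpha_k(g^k+\nabla\mathrm{env}_{\lambda\varphi}(z^k))$, $x^{k+1}=\mathrm{prox}_{\lambda\varphi}(z^{k+1})$, $k=0,1,\dots$. Let $e^k=g^k-\nabla f(x^k)$. Trajectory Lipschitz modulus: $L(\omega)=\sup_{\bar x\in\mathrm{cl}(\mathrm{conv}\{x^k(\omega)\}_k)}\mathrm{lip}\,\nabla f(\bar x)$, where $\mathrm{lip}\,\nabla f(\bar x)=\limsup_{x,x'\to\bar x,\,x\ne x'}\|\nabla f(x)-\nabla f(x')\|/\|x-x'\|$. Notation: $\tau_{m,n}=\sum_{i=m}^{n-1}\alpha_i$; $\bar\tau_{m,n}=(L+\frac2\lambda)\exp((L+\frac2\lambda)\tau_{m,n})$; $s_{m,n}=\max_{m<j\le n}\|\sum_{i=m}^{j-1}\alpha_ie^i\|$; $d_{m,n}=\max_{m<i\le n}\|x^i-x^m\|$; $e^{m,n}=-\sum_{i=m}^{n-1}\alpha_i[F^\lambda_{\mathrm{nor}}(z^i)-F^\lambda_{\mathrm{nor}}(z^m)]-\sum_{i=m}^{n-1}\alpha_ie^i$ (so that $z^n=z^m-\tau_{m,n}F^\lambda_{\mathrm{nor}}(z^m)+e^{m,n}$). *)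

theory Defs
  imports "HOL-Analysis.Analysis" "HOL-Probability.Probability"
begin

definition proper_fun :: "('a \<Rightarrow> ereal) \<Rightarrow> bool" where
  "proper_fun \<phi> \<longleftrightarrow> (\<forall>x. \<phi> x \<noteq> -\<infinity>) \<and> (\<exists>x. \<phi> x < \<infinity>)"

definition convex_fun :: "('a::real_vector \<Rightarrow> ereal) \<Rightarrow> bool" where
  "convex_fun \<phi> \<longleftrightarrow> (\<forall>x y t. 0 \<le> t \<and> t \<le> 1 \<longrightarrow>
      \<phi> ((1 - t) *\<^sub>R x + t *\<^sub>R y) \<le> ereal (1 - t) * \<phi> x + ereal t * \<phi> y)"

definition lsc_fun :: "('a::topological_space \<Rightarrow> ereal) \<Rightarrow> bool" where
  "lsc_fun \<phi> \<longleftrightarrow> (\<forall>x. \<phi> x \<le> Liminf (at x) \<phi>)"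

definition dom_fun :: "('a \<Rightarrow> ereal) \<Rightarrow> 'a set" where
  "dom_fun \<phi> = {x. \<phi> x < \<infinity>}"

text \<open>prox_{lam phi}(x) = argmin_y { phi(y) + 1/(2 lam) ||x - y||^2 } (unique under the standing assumptions).\<close>
definition prox :: "real \<Rightarrow> ('a::real_normed_vector \<Rightarrow> ereal) \<Rightarrow> 'a \<Rightarrow> 'a" where
  "prox lam \<phi> x = (THE y. \<forall>y'. \<phi> y + ereal (norm (x - y)^2 / (2 * lam))
                             \<le> \<phi> y' + ereal (norm (x - y')^2 / (2 * lam)))"

text \<open>gradient of the Moreau envelope: (x - prox x)/lam\<close>
definition grad_env :: "real \<Rightarrow> ('a::real_normed_vector \<Rightarrow> ereal) \<Rightarrow> 'a \<Rightarrow> 'a" where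
  "grad_env lam \<phi> x = (1 / lam) *\<^sub>R (x - prox lam \<phi> x)"

definition Fnor :: "('a \<Rightarrow> 'a) \<Rightarrow> real \<Rightarrow> ('a::real_normed_vector \<Rightarrow> ereal) \<Rightarrow> 'a \<Rightarrow> 'a" where
  "Fnor gf lam \<phi> z = gf (prox lam \<phi> z) + (1 / lam) *\<^sub>R (z - prox lam \<phi> z)"

definition lip :: "('a::real_normed_vector \<Rightarrow> 'b::real_normed_vector) \<Rightarrow> 'a \<Rightarrow> ereal" where
  "lip G xb = (INF \<delta>\<in>{0<..}. SUP p\<in>{(x, x'). x \<in> ball xb \<delta> \<and> x' \<in> ball xb \<delta> \<and> x \<noteq> x'}.
                 ereal (norm (G (fst p) - G (snd p)) / norm (fst p - snd p)))"

definition traj_lip :: "('a::real_normed_vector \<Rightarrow> 'a) \<Rightarrow> (nat \<Rightarrow> 'a) \<Rightarrow> ereal" where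
  "traj_lip gf xs = (SUP xb\<in>closure (convex hull (range xs)). lip gf xb)"

end

theory Submission
  imports Defs
begin

(* The estimate is pathwise: fix the sample \<omega> and write F_i = F_nor(z^i), so that the update reads
   z^(i+1) = z^i - \<alpha>_i (F_i + e^i) and
     z^j - z^m = -(\<tau>_(m,j) F_m + \<Sum> \<alpha>_i (F_i - F_m) + \<Sum> \<alpha>_i e^i).
   The proximal map is nonexpansive (variational inequality of the strongly convex prox objective),
   and the pointwise bound lip \<nabla>f \<le> L on the closed convex hull of the iterates, chained along
   segments, makes \<nabla>f L-Lipschitz there; hence F_nor is (L + 2/\<lambda>)-Lipschitz along the trajectory.
   Then u_j = ||z^j - z^m|| satisfies u_j \<le> \<tau> ||F_m|| + s + c \<Sum> \<alpha>_i u_i, a discrete Gronwall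
   inequality gives u_j \<le> (\<tau> ||F_m|| + s) exp(c \<tau>), the same sum controls e^(m,n), and
   exp(c \<tau>) \<le> 1 + \<tau> c exp(c \<tau>) yields the stated constants. *)

section \<open>Lower semicontinuity and minimisation on compact sets\<close>

lemma lsc_fun_open_superlevel:
  fixes \<phi> :: "'a::topological_space \<Rightarrow> ereal"
  assumes "lsc_fun \<phi>"
  shows "open {y. c < \<phi> y}"
proof (rule Topological_Spaces.openI)
  fix x assume "x \<in> {y. c < \<phi> y}"
  hence cx: "c < \<phi> x" by simp
  have "\<phi> x \<le> Liminf (at x) \<phi>" using assms unfolding lsc_fun_def by blast
  hence "\<forall>\<^sub>F y in at x. c < \<phi> y" using cx by (intro less_LiminfD) (rule order_less_le_trans)
  then obtain S where S: "open S" "x \<in> S" "\<forall>y\<in>S. y \<noteq> x \<longrightarrow> c < \<phi> y"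
    unfolding eventually_at_topological by blast
  have "S \<subseteq> {y. c < \<phi> y}" using S(3) cx by auto
  with S(1,2) show "\<exists>S. open S \<and> x \<in> S \<and> S \<subseteq> {y. c < \<phi> y}" by blast
qed

lemma open_superlevel_add_continuous:
  fixes \<phi> :: "'a::topological_space \<Rightarrow> ereal"
  assumes "\<And>c. open {y. c < \<phi> y}" "continuous_on UNIV q"
  shows "open {y. c < \<phi> y + ereal (q y)}"
proof -
  have eq: "{y. c < \<phi> y + ereal (q y)} = (\<Union>r. {y. ereal r < \<phi> y} \<inter> {y. c < ereal (r + q y)})"
  proof (intro set_eqI iffI)
    fix y assume "y \<in> {y. c < \<phi> y + ereal (q y)}"
    then obtain r where r: "c < ereal r" "ereal r < \<phi> y + ereal (q y)"
      using ereal_dense2 by auto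
    hence "ereal (r - q y) < \<phi> y" "c < ereal (r - q y + q y)" by (cases "\<phi> y"; simp)+
    thus "y \<in> (\<Union>r. {y. ereal r < \<phi> y} \<inter> {y. c < ereal (r + q y)})" by blast
  next
    fix y assume "y \<in> (\<Union>r. {y. ereal r < \<phi> y} \<inter> {y. c < ereal (r + q y)})"
    then obtain r where r: "ereal r < \<phi> y" "c < ereal (r + q y)" by blast
    hence "ereal (r + q y) < \<phi> y + ereal (q y)" by (cases "\<phi> y") simp_all
    with r(2) show "y \<in> {y. c < \<phi> y + ereal (q y)}" using order_less_trans by blast
  qed
  have "open {y. c < ereal (r + q y)}" for r
    by (intro open_Collect_less continuous_on_const continuous_on_ereal continuous_on_add assms(2))
  thus ?thesis unfolding eq by (intro open_UN open_Int ballI assms(1))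
qed

lemma open_superlevel_attains_min:
  fixes h :: "'a::topological_space \<Rightarrow> ereal"
  assumes superlevel: "\<And>c. open {y. c < h y}" and K: "compact K" "K \<noteq> {}"
  obtains y where "y \<in> K" "\<And>w. w \<in> K \<Longrightarrow> h y \<le> h w"
proof -
  define v where "v = (INF w\<in>K. h w)"
  have "\<exists>y\<in>K. h y = v"
  proof (rule ccontr)
    assume "\<not> (\<exists>y\<in>K. h y = v)"
    hence lt: "\<forall>y\<in>K. v < h y" unfolding v_def by (metis INF_lower order_le_less)
    have "K \<subseteq> (\<Union>c\<in>{c. v < c}. {y. c < h y})"
    proof
      fix y assume "y \<in> K"
      then obtain c where "v < c" "c < h y" using lt dense by blast
      thus "y \<in> (\<Union>c\<in>{c. v < c}. {y. c < h y})" by blast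
    qed
    then obtain C where C: "C \<subseteq> {c. v < c}" "finite C" "K \<subseteq> (\<Union>c\<in>C. {y. c < h y})"
      using compactE_image[OF K(1), of "{c. v < c}" "\<lambda>c. {y. c < h y}"] superlevel by blast
    with K(2) have "C \<noteq> {}" by auto
    have "Min C \<le> h w" if w: "w \<in> K" for w
    proof -
      obtain c where "c \<in> C" "c < h w" using C(3) w by blast
      thus ?thesis using C(2) by (meson Min_le less_imp_le order_trans)
    qed
    hence "Min C \<le> v" unfolding v_def by (rule INF_greatest)
    moreover have "v < Min C" using C \<open>C \<noteq> {}\<close> by auto
    ultimately show False by simp
  qed
  thus ?thesis using that unfolding v_def by (metis INF_lower)
qed

section \<open>The proximal map\<close>

lemma convex_lsc_proper_cone_minorant:
  fixes \<phi> :: "'a::euclidean_space \<Rightarrow> ereal"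
  assumes cv: "convex_fun \<phi>" and ls: "lsc_fun \<phi>" and pr: "proper_fun \<phi>" and a: "\<phi> x0 = ereal a"
  obtains m0 K where "\<And>y. ereal (m0 - K * norm (y - x0)) \<le> \<phi> y"
proof -
  have "cball x0 1 \<noteq> {}" by simp
  then obtain y1 where y1: "\<And>w. w \<in> cball x0 1 \<Longrightarrow> \<phi> y1 \<le> \<phi> w"
    using open_superlevel_attains_min[OF lsc_fun_open_superlevel[OF ls] compact_cball] by blast
  have "\<phi> y1 \<le> ereal a" using y1[of x0] a by simp
  moreover have "\<phi> y1 \<noteq> -\<infinity>" using pr unfolding proper_fun_def by auto
  ultimately obtain m0 where m0: "\<phi> y1 = ereal m0" "m0 \<le> a" by (cases "\<phi> y1") auto
  have "ereal (m0 - (a - m0) * norm (y - x0)) \<le> \<phi> y" for y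
  proof (cases "norm (y - x0) \<le> 1")
    case True
    hence "ereal m0 \<le> \<phi> y" using y1[of y] m0 by (simp add: dist_norm norm_minus_commute)
    moreover have "m0 - (a - m0) * norm (y - x0) \<le> m0" using m0 by simp
    ultimately show ?thesis by (meson ereal_less_eq(3) order_trans)
  next
    case False
    define r where "r = norm (y - x0)"
    have r1: "r > 1" using False r_def by simp
    define y' where "y' = (1 - 1 / r) *\<^sub>R x0 + (1 / r) *\<^sub>R y"
    have "y' - x0 = (1 / r) *\<^sub>R (y - x0)" unfolding y'_def by (simp add: algebra_simps)
    moreover have "y \<noteq> x0" using r1 r_def by auto
    ultimately have "norm (y' - x0) = 1" unfolding r_def by simp
    hence "ereal m0 \<le> \<phi> y'" using y1[of y'] m0 by (simp add: dist_norm norm_minus_commute)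
    also have "\<phi> y' \<le> ereal (1 - 1 / r) * \<phi> x0 + ereal (1 / r) * \<phi> y"
      using cv r1 unfolding convex_fun_def y'_def by simp
    finally have ineq: "ereal m0 \<le> ereal (1 - 1 / r) * ereal a + ereal (1 / r) * \<phi> y" using a by simp
    show ?thesis
    proof (cases "\<phi> y")
      case (real b)
      have "m0 \<le> (1 - 1 / r) * a + (1 / r) * b" using ineq real by simp
      hence "r * m0 \<le> r * a - a + b" using r1 by (simp add: field_simps)
      thus ?thesis using real r_def m0(2) by (simp add: algebra_simps)
    next
      case MInf thus ?thesis using pr unfolding proper_fun_def by auto
    qed simp
  qed
  thus thesis by (rule that)
qed

lemma quadratic_dominates_linear:
  fixes lam K B :: real
  assumes lam: "lam > 0"
  obtains R where "R \<ge> 0" "\<And>s. R < s \<Longrightarrow> K * s + B < s^2 / (2 * lam)"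
proof
  define R where "R = max 1 (2 * lam * (\<bar>K\<bar> + \<bar>B\<bar> + 1))"
  show "R \<ge> 0" unfolding R_def by simp
  fix s assume "R < s"
  hence s1: "1 < s" and "2 * lam * (\<bar>K\<bar> + \<bar>B\<bar> + 1) < s" unfolding R_def by auto
  hence "\<bar>K\<bar> + \<bar>B\<bar> + 1 < s / (2 * lam)" using lam by (simp add: field_simps)
  hence "s * (\<bar>K\<bar> + \<bar>B\<bar> + 1) < s * (s / (2 * lam))" using s1 by (intro mult_strict_left_mono) auto
  moreover have "K * s \<le> \<bar>K\<bar> * s" using s1 by (simp add: mult_right_mono)
  moreover have "B \<le> \<bar>B\<bar> * s" using s1 mult_left_mono[of 1 s "\<bar>B\<bar>"] by simp
  moreover have "s * (\<bar>K\<bar> + \<bar>B\<bar> + 1) = \<bar>K\<bar> * s + \<bar>B\<bar> * s + s" "s * (s / (2 * lam)) = s^2 / (2 * lam)"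
    by (simp_all add: algebra_simps power2_eq_square)
  ultimately show "K * s + B < s^2 / (2 * lam)" using s1 by linarith
qed

lemma prox_objective_coercive:
  fixes \<phi> :: "'a::real_normed_vector \<Rightarrow> ereal"
  assumes lam: "lam > 0" and minorant: "\<And>y. ereal (m0 - K * norm (y - x0)) \<le> \<phi> y"
  obtains R where "R \<ge> 0" "\<And>y. R < norm (y - x0) \<Longrightarrow> ereal C < \<phi> y + ereal (norm (z - y)^2 / (2 * lam))"
proof -
  define d where "d = norm (z - x0)"
  obtain R where R: "R \<ge> 0" "\<And>s. R < s \<Longrightarrow> \<bar>K\<bar> * s + (C - m0 + \<bar>K\<bar> * d) < s^2 / (2 * lam)"
    using quadratic_dominates_linear[OF lam] by blast
  show thesis
  proof (rule that[of "R + d"])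
    show "R + d \<ge> 0" using R(1) unfolding d_def by simp
    fix y assume y: "R + d < norm (y - x0)"
    define s where "s = norm (z - y)"
    have r: "norm (y - x0) \<le> s + d"
      unfolding s_def d_def by (metis norm_diff_triangle_le norm_minus_commute order_refl)
    hence "C < m0 - \<bar>K\<bar> * norm (y - x0) + s^2 / (2 * lam)"
      using R(2)[of s] y mult_left_mono[OF r, of "\<bar>K\<bar>"] by (simp add: algebra_simps)
    moreover have "m0 - \<bar>K\<bar> * norm (y - x0) \<le> m0 - K * norm (y - x0)"
      by (simp add: mult_right_mono)
    ultimately have "ereal C < ereal (m0 - K * norm (y - x0)) + ereal (s^2 / (2 * lam))" by simp
    also have "\<dots> \<le> \<phi> y + ereal (s^2 / (2 * lam))" using minorant by (rule add_right_mono)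
    finally show "ereal C < \<phi> y + ereal (norm (z - y)^2 / (2 * lam))" unfolding s_def .
  qed
qed

definition is_prox :: "real \<Rightarrow> ('a::real_normed_vector \<Rightarrow> ereal) \<Rightarrow> 'a \<Rightarrow> 'a \<Rightarrow> bool" where
  "is_prox lam \<phi> z y \<longleftrightarrow> (\<forall>y'. \<phi> y + ereal (norm (z - y)^2 / (2 * lam))
                                \<le> \<phi> y' + ereal (norm (z - y')^2 / (2 * lam)))"

lemma proper_fun_finite_point:
  assumes "proper_fun \<phi>"
  obtains x0 a where "\<phi> x0 = ereal a"
proof -
  obtain x0 where "\<phi> x0 < \<infinity>" "\<phi> x0 \<noteq> -\<infinity>" using assms unfolding proper_fun_def by auto
  thus thesis using that by (cases "\<phi> x0") auto
qed

lemma is_prox_exists: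
  fixes \<phi> :: "'a::euclidean_space \<Rightarrow> ereal"
  assumes cv: "convex_fun \<phi>" and ls: "lsc_fun \<phi>" and pr: "proper_fun \<phi>" and lam: "lam > 0"
  shows "\<exists>y. is_prox lam \<phi> z y"
proof -
  define h where "h y = \<phi> y + ereal (norm (z - y)^2 / (2 * lam))" for y
  obtain x0 a where a: "\<phi> x0 = ereal a" using proper_fun_finite_point[OF pr] .
  obtain m0 K where "\<And>y. ereal (m0 - K * norm (y - x0)) \<le> \<phi> y"
    using convex_lsc_proper_cone_minorant[OF cv ls pr a] by blast
  then obtain R where R: "R \<ge> 0" "\<And>y. R < norm (y - x0) \<Longrightarrow> h x0 < h y"
    using prox_objective_coercive[OF lam, of m0 K x0 \<phi> "a + norm (z - x0)^2 / (2 * lam)" z]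
    unfolding h_def a by auto
  have "open {y. c < h y}" for c
    unfolding h_def by (intro open_superlevel_add_continuous lsc_fun_open_superlevel[OF ls] continuous_intros)
      (use lam in auto)
  moreover have "cball x0 R \<noteq> {}" using R(1) by simp
  ultimately obtain ys where ys: "\<And>w. w \<in> cball x0 R \<Longrightarrow> h ys \<le> h w"
    using open_superlevel_attains_min[OF _ compact_cball] by metis
  have "h ys \<le> h w" for w
  proof (cases "w \<in> cball x0 R")
    case False
    hence "h x0 < h w" using R(2) by (simp add: dist_norm norm_minus_commute)
    moreover have "h ys \<le> h x0" using ys R(1) by simp
    ultimately show ?thesis by simp
  qed (rule ys)
  thus ?thesis unfolding is_prox_def h_def by blast
qed

lemma is_prox_finite:
  assumes pr: "proper_fun \<phi>" and "is_prox lam \<phi> z y"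
  obtains a where "\<phi> y = ereal a"
proof -
  obtain x0 a where "\<phi> x0 = ereal a" using proper_fun_finite_point[OF pr] .
  have "\<phi> y + ereal (norm (z - y)^2 / (2 * lam)) \<le> \<phi> x0 + ereal (norm (z - x0)^2 / (2 * lam))"
    using assms(2) unfolding is_prox_def by blast
  also have "\<dots> < \<infinity>" using \<open>\<phi> x0 = ereal a\<close> by simp
  finally have "\<phi> y < \<infinity>" by auto
  moreover have "\<phi> y \<noteq> -\<infinity>" using pr unfolding proper_fun_def by auto
  ultimately show thesis using that by (cases "\<phi> y") auto
qed

lemma is_prox_segment_inequality:
  fixes \<phi> :: "'a::real_inner \<Rightarrow> ereal"
  assumes cv: "convex_fun \<phi>" and lam: "lam > 0" and prox: "is_prox lam \<phi> z y"
    and a: "\<phi> y = ereal a" and b: "\<phi> w = ereal b" and t: "0 < t" "t \<le> 1"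
  shows "a + inner (z - y) (w - y) / lam \<le> b + t * (norm (w - y)^2 / (2 * lam))"
proof -
  define I where "I = inner (z - y) (w - y)"
  define W where "W = norm (w - y)^2"
  define N where "N = norm (z - y)^2"
  define p where "p = (1 - t) *\<^sub>R y + t *\<^sub>R w"
  have "\<phi> p \<le> ereal ((1 - t) * a + t * b)"
    using cv t a b unfolding convex_fun_def p_def by (metis less_imp_le times_ereal.simps(1) plus_ereal.simps(1))
  have "ereal a + ereal (norm (z - y)^2 / (2 * lam)) \<le> \<phi> p + ereal (norm (z - p)^2 / (2 * lam))"
    using prox a unfolding is_prox_def by metis
  also have "\<dots> \<le> ereal ((1 - t) * a + t * b) + ereal (norm (z - p)^2 / (2 * lam))"
    using \<open>\<phi> p \<le> _\<close> by (rule add_right_mono)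
  finally have "a + N / (2 * lam) \<le> (1 - t) * a + t * b + norm (z - p)^2 / (2 * lam)"
    unfolding N_def by simp
  hence "2 * lam * (a + N / (2 * lam)) \<le> 2 * lam * ((1 - t) * a + t * b + norm (z - p)^2 / (2 * lam))"
    using lam by (intro mult_left_mono) auto
  hence "2 * lam * a + N \<le> 2 * lam * ((1 - t) * a + t * b) + norm (z - p)^2"
    using lam by (simp add: distrib_left)
  moreover have "norm (z - p)^2 = N - 2 * t * I + t^2 * W"
  proof -
    have zp: "z - p = (z - y) - t *\<^sub>R (w - y)" unfolding p_def by (simp add: algebra_simps)
    have "norm (z - p)^2 = norm (z - y)^2 + norm (t *\<^sub>R (w - y))^2 - 2 * inner (z - y) (t *\<^sub>R (w - y))"
      unfolding zp using dot_norm_neg[of "z - y" "t *\<^sub>R (w - y)"] by (simp add: field_simps)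
    thus ?thesis unfolding N_def I_def W_def by (simp add: power_mult_distrib)
  qed
  ultimately have "t * (2 * lam * a + 2 * I) \<le> t * (2 * lam * b + t * W)"
    by (simp add: algebra_simps power2_eq_square)
  hence "2 * lam * a + 2 * I \<le> 2 * lam * b + t * W" using t by simp
  moreover have "2 * lam * (a + I / lam) = 2 * lam * a + 2 * I"
    "2 * lam * (b + t * (W / (2 * lam))) = 2 * lam * b + t * W"
    using lam by (simp_all add: field_simps)
  ultimately have "2 * lam * (a + I / lam) \<le> 2 * lam * (b + t * (W / (2 * lam)))" by simp
  thus ?thesis unfolding I_def W_def by (rule mult_left_le_imp_le) (simp add: lam)
qed

lemma is_prox_variational_inequality:
  fixes \<phi> :: "'a::real_inner \<Rightarrow> ereal"
  assumes cv: "convex_fun \<phi>" and lam: "lam > 0" and prox: "is_prox lam \<phi> z y"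
    and a: "\<phi> y = ereal a" and b: "\<phi> w = ereal b"
  shows "a + inner (z - y) (w - y) / lam \<le> b"
proof -
  define I where "I = inner (z - y) (w - y)"
  define W where "W = norm (w - y)^2"
  have "\<forall>\<^sub>F t in at_right 0. t \<in> {0<..<1::real}" by (rule eventually_at_right_real) simp
  hence ev: "\<forall>\<^sub>F t in at_right 0. a + I / lam \<le> b + t * (W / (2 * lam))"
    unfolding I_def W_def by (rule eventually_mono) (intro is_prox_segment_inequality[OF assms]; simp)
  have lim: "((\<lambda>t. b + t * (W / (2 * lam))) \<longlongrightarrow> b + 0 * (W / (2 * lam))) (at_right 0)"
    by (intro tendsto_intros)
  have "a + I / lam \<le> b + 0 * (W / (2 * lam))"
    by (rule tendsto_lowerbound[OF lim ev]) (simp add: trivial_limit_def[symmetric])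
  thus ?thesis unfolding I_def by simp
qed

lemma is_prox_nonexpansive:
  fixes \<phi> :: "'a::real_inner \<Rightarrow> ereal"
  assumes cv: "convex_fun \<phi>" and pr: "proper_fun \<phi>" and lam: "lam > 0"
    and p: "is_prox lam \<phi> z p" and q: "is_prox lam \<phi> z' q"
  shows "norm (p - q) \<le> norm (z - z')"
proof -
  obtain a where a: "\<phi> p = ereal a" using is_prox_finite[OF pr p] .
  obtain b where b: "\<phi> q = ereal b" using is_prox_finite[OF pr q] .
  have "a + inner (z - p) (q - p) / lam \<le> b" "b + inner (z' - q) (p - q) / lam \<le> a"
    using is_prox_variational_inequality[OF cv lam] p q a b by blast+
  hence "inner (z - p) (q - p) + inner (z' - q) (p - q) \<le> 0"
    using lam by (simp add: field_simps)
  moreover have "inner (z - p) (q - p) + inner (z' - q) (p - q) = norm (p - q)^2 - inner (z - z') (p - q)"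
    unfolding power2_norm_eq_inner by (simp add: inner_diff_left inner_diff_right inner_commute algebra_simps)
  ultimately have "norm (p - q)^2 \<le> inner (z - z') (p - q)" by linarith
  also have "\<dots> \<le> norm (z - z') * norm (p - q)" by (rule norm_cauchy_schwarz)
  finally have "norm (p - q) * norm (p - q) \<le> norm (z - z') * norm (p - q)"
    by (simp add: power2_eq_square)
  thus ?thesis by (cases "p = q") (simp_all add: mult_le_cancel_right)
qed

lemma prox_is_prox:
  fixes \<phi> :: "'a::euclidean_space \<Rightarrow> ereal"
  assumes cv: "convex_fun \<phi>" and ls: "lsc_fun \<phi>" and pr: "proper_fun \<phi>" and lam: "lam > 0"
  shows "is_prox lam \<phi> z (prox lam \<phi> z)"
proof -
  have "\<exists>!y. is_prox lam \<phi> z y"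
  proof (rule ex_ex1I)
    fix y y' assume "is_prox lam \<phi> z y" "is_prox lam \<phi> z y'"
    from is_prox_nonexpansive[OF cv pr lam this] show "y = y'" by simp
  qed (rule is_prox_exists[OF cv ls pr lam])
  thus ?thesis unfolding prox_def is_prox_def[symmetric] by (rule theI')
qed

lemma prox_nonexpansive:
  fixes \<phi> :: "'a::euclidean_space \<Rightarrow> ereal"
  assumes "convex_fun \<phi>" "lsc_fun \<phi>" "proper_fun \<phi>" "lam > 0"
  shows "norm (prox lam \<phi> z - prox lam \<phi> z') \<le> norm (z - z')"
  by (rule is_prox_nonexpansive[OF assms(1,3,4) prox_is_prox[OF assms] prox_is_prox[OF assms]])

section \<open>The pointwise Lipschitz modulus\<close>

lemma lip_nonneg:
  fixes G :: "'a::euclidean_space \<Rightarrow> 'b::real_normed_vector"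
  shows "0 \<le> lip G p"
  unfolding lip_def
proof (rule INF_greatest)
  fix d :: real assume "d \<in> {0<..}"
  obtain v :: 'a where "v \<in> Basis" using nonempty_Basis by blast
  define q0 where "q0 = (p, p + (d / 2) *\<^sub>R v)"
  have "q0 \<in> {(x, x'). x \<in> ball p d \<and> x' \<in> ball p d \<and> x \<noteq> x'}"
    using \<open>v \<in> Basis\<close> \<open>d \<in> {0<..}\<close> unfolding q0_def by (auto simp: dist_norm)
  hence "ereal (norm (G (fst q0) - G (snd q0)) / norm (fst q0 - snd q0))
      \<le> (SUP q\<in>{(x, x'). x \<in> ball p d \<and> x' \<in> ball p d \<and> x \<noteq> x'}.
            ereal (norm (G (fst q) - G (snd q)) / norm (fst q - snd q)))"
    by (rule SUP_upper)
  moreover have "0 \<le> ereal (norm (G (fst q0) - G (snd q0)) / norm (fst q0 - snd q0))" by simp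
  ultimately show "0 \<le> (SUP q\<in>{(x, x'). x \<in> ball p d \<and> x' \<in> ball p d \<and> x \<noteq> x'}.
            ereal (norm (G (fst q) - G (snd q)) / norm (fst q - snd q)))"
    by (rule order_trans[rotated])
qed

lemma lip_less_imp_lipschitz_on_ball:
  fixes G :: "'a::real_normed_vector \<Rightarrow> 'b::real_normed_vector"
  assumes "lip G p < ereal c" "0 \<le> c"
  obtains \<delta> where "\<delta> > 0" "c-lipschitz_on (ball p \<delta>) G"
proof -
  obtain \<delta> where \<delta>: "\<delta> > 0" and sup: "(SUP q\<in>{(x, x'). x \<in> ball p \<delta> \<and> x' \<in> ball p \<delta> \<and> x \<noteq> x'}.
                 ereal (norm (G (fst q) - G (snd q)) / norm (fst q - snd q))) < ereal c"
    using assms(1) unfolding lip_def INF_less_iff by auto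
  have "dist (G x) (G x') \<le> c * dist x x'" if "x \<in> ball p \<delta>" "x' \<in> ball p \<delta>" for x x'
  proof (cases "x = x'")
    case False
    with that have "ereal (norm (G x - G x') / norm (x - x')) < ereal c"
      using sup by (metis (mono_tags, lifting) SUP_upper case_prod_conv fst_conv mem_Collect_eq
          order_le_less_trans snd_conv)
    with False show ?thesis by (simp add: dist_norm divide_less_eq less_imp_le)
  qed simp
  hence "c-lipschitz_on (ball p \<delta>) G" using assms(2) by (rule lipschitz_onI)
  with \<delta> show thesis by (rule that)
qed

lemma lip_less_on_segment_imp_bound:
  fixes G :: "'a::real_normed_vector \<Rightarrow> 'b::real_normed_vector"
  assumes lip: "\<And>p. p \<in> closed_segment a b \<Longrightarrow> lip G p < ereal c" and c: "0 \<le> c"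
  shows "norm (G b - G a) \<le> c * norm (b - a)"
proof -
  define f where "f t = G (a + t *\<^sub>R (b - a))" for t :: real
  have seg: "a + t *\<^sub>R (b - a) \<in> closed_segment a b" if "t \<in> {0..1}" for t
    using that unfolding in_segment by (intro exI[of _ t]) (auto simp: algebra_simps)
  have "continuous_on {0..1} f"
  proof (intro continuous_at_imp_continuous_on ballI)
    fix t :: real assume "t \<in> {0..1}"
    then obtain \<delta> where "\<delta> > 0" "c-lipschitz_on (ball (a + t *\<^sub>R (b - a)) \<delta>) G"
      using lip_less_imp_lipschitz_on_ball[OF lip[OF seg] c] by metis
    hence "isCont G (a + t *\<^sub>R (b - a))"
      by (intro continuous_on_interior[OF lipschitz_on_continuous_on]) auto
    thus "isCont f t" unfolding f_def
      by (intro continuous_at_compose[of t "\<lambda>t. a + t *\<^sub>R (b - a)" G, unfolded o_def] continuous_intros)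
  qed
  hence "(c * norm (b - a))-lipschitz_on {0..1} f"
  proof (rule locally_lipschitz_imp_lipschitz)
    fix x y :: real assume x: "x \<in> {0..<1}" and "x < y"
    obtain \<delta> where \<delta>: "\<delta> > 0" "c-lipschitz_on (ball (a + x *\<^sub>R (b - a)) \<delta>) G"
      using lip_less_imp_lipschitz_on_ball[OF lip[OF seg] c] x by (metis atLeastLessThan_iff atLeastAtMost_iff less_imp_le)
    have N1: "0 < norm (b - a) + 1" by (simp add: add_nonneg_pos)
    have "0 < \<delta> / (norm (b - a) + 1)" using \<delta>(1) N1 by (rule divide_pos_pos)
    define z where "z = min y (x + \<delta> / (norm (b - a) + 1))"
    have z: "z \<in> {x<..y}" using \<open>0 < \<delta> / _\<close> \<open>x < y\<close> unfolding z_def by auto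
    have "(z - x) * norm (b - a) \<le> \<delta> / (norm (b - a) + 1) * norm (b - a)"
      unfolding z_def by (intro mult_right_mono) auto
    also have "\<dots> = \<delta> * (norm (b - a) / (norm (b - a) + 1))" by simp
    also have "\<dots> < \<delta> * 1" using N1 \<delta>(1) by (intro mult_strict_left_mono) auto
    finally have "dist (a + z *\<^sub>R (b - a)) (a + x *\<^sub>R (b - a)) < \<delta>"
      using z by (simp add: dist_norm scaleR_diff_left[symmetric])
    hence "dist (f z) (f x) \<le> c * dist (a + z *\<^sub>R (b - a)) (a + x *\<^sub>R (b - a))"
      unfolding f_def using \<delta> by (intro lipschitz_onD[OF \<delta>(2)]) (auto simp: dist_commute)
    also have "\<dots> = c * norm (b - a) * (z - x)"
      using z by (simp add: dist_norm scaleR_diff_left[symmetric])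
    finally show "\<exists>z\<in>{x<..y}. dist (f z) (f x) \<le> c * norm (b - a) * (z - x)" using z by blast
  qed (simp add: c)
  from lipschitz_onD[OF this, of 1 0] show ?thesis by (simp add: f_def dist_norm)
qed

lemma lipschitz_on_convex_of_lip_le:
  fixes G :: "'a::real_normed_vector \<Rightarrow> 'b::real_normed_vector"
  assumes S: "convex S" and lip: "\<And>p. p \<in> S \<Longrightarrow> lip G p \<le> ereal L" and L: "0 \<le> L"
  shows "L-lipschitz_on S G"
proof (rule lipschitz_onI)
  fix x y assume "x \<in> S" "y \<in> S"
  hence seg: "closed_segment y x \<subseteq> S" using S convex_contains_segment by metis
  have bound: "norm (G x - G y) \<le> c * norm (x - y)" if c: "L < c" for c
  proof (rule lip_less_on_segment_imp_bound)
    fix p assume "p \<in> closed_segment y x"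
    hence "lip G p \<le> ereal L" using seg lip by blast
    also have "ereal L < ereal c" using c by simp
    finally show "lip G p < ereal c" .
  qed (use c L in linarith)
  show "dist (G x) (G y) \<le> L * dist x y"
  proof (cases "x = y")
    case False
    have "norm (G x - G y) / norm (x - y) \<le> L"
    proof (rule dense_ge)
      fix c assume "L < c"
      thus "norm (G x - G y) / norm (x - y) \<le> c"
        using bound[of c] False by (simp add: pos_divide_le_eq)
    qed
    thus ?thesis using False by (simp add: dist_norm divide_le_eq)
  qed simp
qed (rule L)

section \<open>The normal map along a trajectory\<close>

lemma traj_lip_nonneg:
  fixes G :: "'a::euclidean_space \<Rightarrow> 'a"
  shows "0 \<le> traj_lip G xs"
proof -
  have "xs 0 \<in> closure (convex hull range xs)"
    by (meson closure_subset hull_inc rangeI subsetD)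
  hence "lip G (xs 0) \<le> traj_lip G xs" unfolding traj_lip_def by (rule SUP_upper)
  thus ?thesis by (rule order_trans[OF lip_nonneg])
qed

lemma traj_lip_lipschitz_on:
  fixes G :: "'a::real_normed_vector \<Rightarrow> 'a"
  assumes "traj_lip G xs \<le> ereal L" "0 \<le> L"
  shows "L-lipschitz_on (closure (convex hull range xs)) G"
proof (rule lipschitz_on_convex_of_lip_le)
  fix p assume "p \<in> closure (convex hull range xs)"
  hence "lip G p \<le> traj_lip G xs" unfolding traj_lip_def by (rule SUP_upper)
  thus "lip G p \<le> ereal L" using assms(1) by (rule order_trans)
qed (simp_all add: convex_closure assms(2))

lemma Fnor_lipschitz:
  fixes \<phi> :: "'a::euclidean_space \<Rightarrow> ereal"
  assumes \<phi>: "convex_fun \<phi>" "lsc_fun \<phi>" "proper_fun \<phi>" and lam: "lam > 0"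
    and gf_lip: "norm (gf (prox lam \<phi> z) - gf (prox lam \<phi> z')) \<le> L * norm (prox lam \<phi> z - prox lam \<phi> z')"
    and L: "0 \<le> L"
  shows "norm (Fnor gf lam \<phi> z - Fnor gf lam \<phi> z') \<le> (L + 2 / lam) * norm (z - z')"
proof -
  define d where "d = prox lam \<phi> z - prox lam \<phi> z'"
  have d: "norm d \<le> norm (z - z')" unfolding d_def by (rule prox_nonexpansive[OF \<phi> lam])
  have "Fnor gf lam \<phi> z - Fnor gf lam \<phi> z'
      = (gf (prox lam \<phi> z) - gf (prox lam \<phi> z')) + (1 / lam) *\<^sub>R ((z - z') - d)"
    unfolding Fnor_def d_def by (simp add: algebra_simps)
  hence "norm (Fnor gf lam \<phi> z - Fnor gf lam \<phi> z')
      \<le> norm (gf (prox lam \<phi> z) - gf (prox lam \<phi> z')) + (1 / lam) * norm ((z - z') - d)"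
    using lam norm_triangle_ineq[of "gf (prox lam \<phi> z) - gf (prox lam \<phi> z')" "(1 / lam) *\<^sub>R ((z - z') - d)"]
    by simp
  also have "\<dots> \<le> L * norm d + (1 / lam) * norm ((z - z') - d)"
    using gf_lip unfolding d_def by simp
  also have "\<dots> \<le> L * norm (z - z') + (1 / lam) * (2 * norm (z - z'))"
    using d L lam norm_triangle_ineq4[of "z - z'" d] by (intro add_mono mult_left_mono) auto
  finally show ?thesis by (simp add: algebra_simps)
qed

lemma exp_le_one_plus_mult_exp: "exp x \<le> 1 + x * exp x" for x :: real
proof -
  have "exp x * (1 - x) \<le> exp x * exp (- x)"
    using exp_ge_add_one_self[of "- x"] by (intro mult_left_mono) auto
  thus ?thesis by (simp add: exp_minus algebra_simps)
qed

lemma discrete_gronwall: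
  fixes u \<alpha> :: "nat \<Rightarrow> real"
  assumes A: "0 \<le> A" and c: "0 \<le> c" and \<alpha>: "\<And>i. 0 \<le> \<alpha> i"
    and rec: "\<And>j. m \<le> j \<Longrightarrow> j < n \<Longrightarrow> u j \<le> A + c * (\<Sum>i\<in>{m..<j}. \<alpha> i * u i)"
    and j: "m \<le> j" "j \<le> n"
  shows "c * (\<Sum>i\<in>{m..<j}. \<alpha> i * u i) \<le> A * (exp (c * (\<Sum>i\<in>{m..<j}. \<alpha> i)) - 1)"
  using j(1)
proof (induction j rule: dec_induct)
  case (step k)
  define E where "E = exp (c * (\<Sum>i\<in>{m..<k}. \<alpha> i))"
  have IH: "c * (\<Sum>i\<in>{m..<k}. \<alpha> i * u i) \<le> A * (E - 1)" using step(3) unfolding E_def .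
  have "u k \<le> A + c * (\<Sum>i\<in>{m..<k}. \<alpha> i * u i)" using rec step(1,2) j(2) by simp
  also have "\<dots> \<le> A * E" using IH by (simp add: algebra_simps)
  finally have "c * \<alpha> k * u k \<le> c * \<alpha> k * (A * E)" using c \<alpha>[of k] by (intro mult_left_mono) auto
  hence "c * (\<Sum>i\<in>{m..<Suc k}. \<alpha> i * u i) \<le> A * (E - 1) + c * \<alpha> k * (A * E)"
    using IH step(1) by (simp add: distrib_left)
  also have "\<dots> = A * (E * (1 + c * \<alpha> k) - 1)" by (simp add: algebra_simps)
  also have "\<dots> \<le> A * (E * exp (c * \<alpha> k) - 1)"
    using A unfolding E_def by (intro mult_left_mono diff_right_mono) (auto simp: exp_ge_add_one_self)
  also have "E * exp (c * \<alpha> k) = exp (c * (\<Sum>i\<in>{m..<Suc k}. \<alpha> i))"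
    using step(1) unfolding E_def by (simp add: distrib_left exp_add)
  finally show ?case .
qed simp

lemma perturbed_iteration_bounds:
  fixes z F e :: "nat \<Rightarrow> 'a::real_normed_vector"
  assumes iter: "\<And>k. z (Suc k) = z k - \<alpha> k *\<^sub>R (F k + e k)"
    and \<alpha>: "\<And>k. 0 \<le> \<alpha> k" and c: "0 \<le> c" and mn: "m \<le> n"
    and F_lip: "\<And>i. norm (F i - F m) \<le> c * norm (z i - z m)"
    and s: "\<And>j. m \<le> j \<Longrightarrow> j \<le> n \<Longrightarrow> norm (\<Sum>i\<in>{m..<j}. \<alpha> i *\<^sub>R e i) \<le> s"
  defines "A \<equiv> (\<Sum>i\<in>{m..<n}. \<alpha> i) * norm (F m) + s"
  shows perturbed_iteration_displacement:
      "\<And>j. m \<le> j \<Longrightarrow> j \<le> n \<Longrightarrow> norm (z j - z m) \<le> A * exp (c * (\<Sum>i\<in>{m..<j}. \<alpha> i))"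
    and perturbed_iteration_drift:
      "norm (\<Sum>i\<in>{m..<n}. \<alpha> i *\<^sub>R (F i - F m)) \<le> A * (exp (c * (\<Sum>i\<in>{m..<n}. \<alpha> i)) - 1)"
proof -
  define u where "u i = norm (z i - z m)" for i
  have z_sum: "z m - z j = (\<Sum>i\<in>{m..<j}. \<alpha> i) *\<^sub>R F m + (\<Sum>i\<in>{m..<j}. \<alpha> i *\<^sub>R (F i - F m))
      + (\<Sum>i\<in>{m..<j}. \<alpha> i *\<^sub>R e i)" if "m \<le> j" for j
    using that
  proof (induction j rule: dec_induct)
    case (step k)
    have "z m - z (Suc k) = (z m - z k) + \<alpha> k *\<^sub>R (F k + e k)" by (simp add: iter)
    also note step.IH
    finally show ?case using step.hyps(1) by (simp add: algebra_simps scaleR_add_left)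
  qed simp
  have drift_le: "norm (\<Sum>i\<in>{m..<j}. \<alpha> i *\<^sub>R (F i - F m)) \<le> c * (\<Sum>i\<in>{m..<j}. \<alpha> i * u i)" for j
  proof -
    have "norm (\<Sum>i\<in>{m..<j}. \<alpha> i *\<^sub>R (F i - F m)) \<le> (\<Sum>i\<in>{m..<j}. norm (\<alpha> i *\<^sub>R (F i - F m)))"
      by (rule norm_sum)
    also have "\<dots> = (\<Sum>i\<in>{m..<j}. \<alpha> i * norm (F i - F m))" using \<alpha> by simp
    also have "\<dots> \<le> (\<Sum>i\<in>{m..<j}. \<alpha> i * (c * u i))"
      unfolding u_def using F_lip \<alpha> by (intro sum_mono mult_left_mono) auto
    finally show ?thesis by (simp add: sum_distrib_left algebra_simps)
  qed
  have "0 \<le> s" using s[of m] mn by simp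
  hence A: "0 \<le> A" unfolding A_def using \<alpha> by (simp add: sum_nonneg)
  have rec: "u j \<le> A + c * (\<Sum>i\<in>{m..<j}. \<alpha> i * u i)" if "m \<le> j" "j \<le> n" for j
  proof -
    have "u j \<le> norm ((\<Sum>i\<in>{m..<j}. \<alpha> i) *\<^sub>R F m) + norm (\<Sum>i\<in>{m..<j}. \<alpha> i *\<^sub>R (F i - F m))
        + norm (\<Sum>i\<in>{m..<j}. \<alpha> i *\<^sub>R e i)"
      unfolding u_def norm_minus_commute[of "z j"] z_sum[OF that(1)] by (rule norm_triangle_le, rule add_right_mono, rule norm_triangle_ineq)
    also have "norm ((\<Sum>i\<in>{m..<j}. \<alpha> i) *\<^sub>R F m) \<le> (\<Sum>i\<in>{m..<n}. \<alpha> i) * norm (F m)"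
      using \<alpha> that by (simp add: sum_nonneg mult_right_mono sum_mono2)
    finally show ?thesis using drift_le[of j] s[OF that] unfolding A_def by linarith
  qed
  have gronwall: "c * (\<Sum>i\<in>{m..<j}. \<alpha> i * u i) \<le> A * (exp (c * (\<Sum>i\<in>{m..<j}. \<alpha> i)) - 1)"
    if "m \<le> j" "j \<le> n" for j
  proof (rule discrete_gronwall[OF A c \<alpha> _ that])
    fix k assume "m \<le> k" "k < n"
    thus "u k \<le> A + c * (\<Sum>i\<in>{m..<k}. \<alpha> i * u i)" by (intro rec) auto
  qed
  show "norm (z j - z m) \<le> A * exp (c * (\<Sum>i\<in>{m..<j}. \<alpha> i))" if "m \<le> j" "j \<le> n" for j
    using rec[OF that] gronwall[OF that] unfolding u_def by (simp add: algebra_simps)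
  show "norm (\<Sum>i\<in>{m..<n}. \<alpha> i *\<^sub>R (F i - F m)) \<le> A * (exp (c * (\<Sum>i\<in>{m..<n}. \<alpha> i)) - 1)"
    using drift_le[of n] gronwall[OF mn order_refl] by linarith
qed

lemma perturbed_iteration_estimates:
  fixes z F e :: "nat \<Rightarrow> 'a::real_normed_vector"
  assumes iter: "\<And>k. z (Suc k) = z k - \<alpha> k *\<^sub>R (F k + e k)"
    and \<alpha>: "\<And>k. 0 \<le> \<alpha> k" and c: "0 \<le> c" and mn: "m < n"
    and F_lip: "\<And>i. norm (F i - F m) \<le> c * norm (z i - z m)"
  defines "\<tau> \<equiv> \<Sum>i\<in>{m..<n}. \<alpha> i"
    and "s \<equiv> Max ((\<lambda>j. norm (\<Sum>i\<in>{m..<j}. \<alpha> i *\<^sub>R e i)) ` {m<..n})"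
  shows "Max ((\<lambda>i. norm (z i - z m)) ` {m<..n}) \<le> (1 + \<tau> * (c * exp (c * \<tau>))) * (\<tau> * norm (F m) + s)"
    and "norm (- (\<Sum>i\<in>{m..<n}. \<alpha> i *\<^sub>R (F i - F m)) - (\<Sum>i\<in>{m..<n}. \<alpha> i *\<^sub>R e i))
           \<le> c * exp (c * \<tau>) * \<tau>^2 * norm (F m) + (1 + c * exp (c * \<tau>) * \<tau>) * s"
proof -
  have s_ge: "norm (\<Sum>i\<in>{m..<j}. \<alpha> i *\<^sub>R e i) \<le> s" if "j \<in> {m<..n}" for j
    unfolding s_def using that by (intro Max_ge) auto
  have "0 \<le> s" using s_ge[of n] mn norm_ge_zero by (meson greaterThanAtMost_iff order_refl order_trans)
  have s: "norm (\<Sum>i\<in>{m..<j}. \<alpha> i *\<^sub>R e i) \<le> s" if "m \<le> j" "j \<le> n" for j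
    using that s_ge \<open>0 \<le> s\<close> by (cases "j = m") auto
  define A where "A = \<tau> * norm (F m) + s"
  have "0 \<le> A" unfolding A_def \<tau>_def using \<alpha> \<open>0 \<le> s\<close> by (simp add: sum_nonneg)
  have exp_le: "exp (c * \<tau>) \<le> 1 + \<tau> * (c * exp (c * \<tau>))"
    using exp_le_one_plus_mult_exp[of "c * \<tau>"] by (simp add: algebra_simps)
  have "norm (z j - z m) \<le> (1 + \<tau> * (c * exp (c * \<tau>))) * A" if "j \<in> {m<..n}" for j
  proof -
    have "norm (z j - z m) \<le> A * exp (c * (\<Sum>i\<in>{m..<j}. \<alpha> i))"
      using perturbed_iteration_displacement[OF iter \<alpha> c _ F_lip s] that unfolding A_def \<tau>_def by auto
    also have "\<dots> \<le> A * exp (c * \<tau>)"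
      using that \<alpha> c \<open>0 \<le> A\<close> unfolding \<tau>_def by (auto intro!: mult_left_mono sum_mono2)
    also have "\<dots> \<le> A * (1 + \<tau> * (c * exp (c * \<tau>)))" using exp_le \<open>0 \<le> A\<close> by (rule mult_left_mono)
    finally show ?thesis by (simp add: mult.commute)
  qed
  thus "Max ((\<lambda>i. norm (z i - z m)) ` {m<..n}) \<le> (1 + \<tau> * (c * exp (c * \<tau>))) * (\<tau> * norm (F m) + s)"
    using mn unfolding A_def by (subst Max_le_iff) auto
  have "norm (- (\<Sum>i\<in>{m..<n}. \<alpha> i *\<^sub>R (F i - F m)) - (\<Sum>i\<in>{m..<n}. \<alpha> i *\<^sub>R e i))
      \<le> norm (\<Sum>i\<in>{m..<n}. \<alpha> i *\<^sub>R (F i - F m)) + norm (\<Sum>i\<in>{m..<n}. \<alpha> i *\<^sub>R e i)"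
    using norm_triangle_ineq4[of "- (\<Sum>i\<in>{m..<n}. \<alpha> i *\<^sub>R (F i - F m))" "\<Sum>i\<in>{m..<n}. \<alpha> i *\<^sub>R e i"]
    by simp
  also have "\<dots> \<le> A * (exp (c * \<tau>) - 1) + s"
    using perturbed_iteration_drift[OF iter \<alpha> c _ F_lip s] s[of n] mn unfolding A_def \<tau>_def
    by (intro add_mono) auto
  also have "\<dots> \<le> A * (\<tau> * (c * exp (c * \<tau>))) + s"
    using exp_le \<open>0 \<le> A\<close> by (intro add_right_mono mult_left_mono) auto
  finally show "norm (- (\<Sum>i\<in>{m..<n}. \<alpha> i *\<^sub>R (F i - F m)) - (\<Sum>i\<in>{m..<n}. \<alpha> i *\<^sub>R e i))
           \<le> c * exp (c * \<tau>) * \<tau>^2 * norm (F m) + (1 + c * exp (c * \<tau>) * \<tau>) * s"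
    unfolding A_def by (simp add: algebra_simps power2_eq_square)
qed

theorem lemma2p7:
  fixes \<phi> :: "'a::euclidean_space \<Rightarrow> ereal"
    and f :: "'a \<Rightarrow> real" and gf :: "'a \<Rightarrow> 'a" and U :: "'a set"
    and M :: "'w measure" and Fl :: "nat \<Rightarrow> 'w measure"
    and lam :: real and \<alpha> :: "nat \<Rightarrow> real" and z0 :: 'a
    and z x g :: "nat \<Rightarrow> 'w \<Rightarrow> 'a"
    and m n :: nat and \<omega> :: 'w
  assumes phi: "convex_fun \<phi>" "lsc_fun \<phi>" "proper_fun \<phi>"
    and U: "open U" "dom_fun \<phi> \<subseteq> U"
    and f_grad: "\<And>y. y \<in> U \<Longrightarrow> (f has_derivative (\<lambda>h. gf y \<bullet> h)) (at y)"
    and f_C1: "continuous_on U gf"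
    and M: "prob_space M"
    and Fl: "filtration (space M) Fl" "\<And>k. sets (Fl k) \<subseteq> sets M"
    and lam: "lam > 0"
    and alpha: "\<And>k. \<alpha> k > 0"
    and z_0: "\<And>w. z 0 w = z0"
    and x_def: "\<And>k w. x k w = prox lam \<phi> (z k w)"
    and g_meas: "\<And>k. g k \<in> borel_measurable (Fl (Suc k))"
    and z_step: "\<And>k w. z (Suc k) w = z k w - \<alpha> k *\<^sub>R (g k w + grad_env lam \<phi> (z k w))"
    and mn: "m < n"
    and w: "\<omega> \<in> space M"
    and Lfin: "traj_lip gf (\<lambda>k. x k \<omega>) < \<infinity>"
  shows
    "let L = real_of_ereal (traj_lip gf (\<lambda>k. x k \<omega>));
         e = (\<lambda>k. g k \<omega> - gf (x k \<omega>));
         \<tau> = (\<Sum>i\<in>{m..<n}. \<alpha> i);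
         \<tau>b = (L + 2 / lam) * exp ((L + 2 / lam) * \<tau>);
         s = Max ((\<lambda>j. norm (\<Sum>i\<in>{m..<j}. \<alpha> i *\<^sub>R e i)) ` {m<..n});
         d = Max ((\<lambda>i. norm (x i \<omega> - x m \<omega>)) ` {m<..n});
         Fm = Fnor gf lam \<phi> (z m \<omega>);
         emn = - (\<Sum>i\<in>{m..<n}. \<alpha> i *\<^sub>R (Fnor gf lam \<phi> (z i \<omega>) - Fm))
               - (\<Sum>i\<in>{m..<n}. \<alpha> i *\<^sub>R e i)
     in d \<le> Max ((\<lambda>i. norm (z i \<omega> - z m \<omega>)) ` {m<..n})
      \<and> Max ((\<lambda>i. norm (z i \<omega> - z m \<omega>)) ` {m<..n}) \<le> (1 + \<tau> * \<tau>b) * (\<tau> * norm Fm + s)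
      \<and> norm emn \<le> \<tau>b * \<tau>^2 * norm Fm + (1 + \<tau>b * \<tau>) * s"
proof -
  obtain L where TL: "traj_lip gf (\<lambda>k. x k \<omega>) = ereal L" and L: "0 \<le> L"
    using traj_lip_nonneg[of gf "\<lambda>k. x k \<omega>"] Lfin by (cases "traj_lip gf (\<lambda>k. x k \<omega>)") auto
  define e where "e k = g k \<omega> - gf (x k \<omega>)" for k
  define c where "c = L + 2 / lam"
  have "L-lipschitz_on (closure (convex hull range (\<lambda>k. x k \<omega>))) gf"
    using TL L by (intro traj_lip_lipschitz_on) auto
  hence gf_lip: "norm (gf (x i \<omega>) - gf (x j \<omega>)) \<le> L * norm (x i \<omega> - x j \<omega>)" for i j
    by (rule lipschitz_on_normD) (meson closure_subset hull_inc rangeI subsetD)+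
  have F_lip: "norm (Fnor gf lam \<phi> (z i \<omega>) - Fnor gf lam \<phi> (z m \<omega>)) \<le> c * norm (z i \<omega> - z m \<omega>)" for i
    unfolding c_def using Fnor_lipschitz[OF phi lam gf_lip[of i m, unfolded x_def] L] .
  have iter: "z (Suc k) \<omega> = z k \<omega> - \<alpha> k *\<^sub>R (Fnor gf lam \<phi> (z k \<omega>) + e k)" for k
    unfolding z_step e_def Fnor_def grad_env_def x_def by (simp add: algebra_simps)
  have "0 \<le> c" unfolding c_def using L lam by simp
  note estimates = perturbed_iteration_estimates[OF iter less_imp_le[OF alpha] this mn F_lip]
  have "Max ((\<lambda>i. norm (x i \<omega> - x m \<omega>)) ` {m<..n}) \<le> Max ((\<lambda>i. norm (z i \<omega> - z m \<omega>)) ` {m<..n})"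
    using mn prox_nonexpansive[OF phi lam] unfolding x_def
    by (subst Max_le_iff) (auto intro: order_trans[OF _ Max_ge])
  with estimates show ?thesis
    unfolding Let_def c_def[symmetric] e_def[symmetric] TL real_of_ereal.simps
    by (simp add: algebra_simps)
qed

end
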